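(* Let $n\ge 2$ and let $\mathbf{C}_n=\langle C_n,\wedge,\vee,\to,0,1\rangle$ be a semi-Heyting algebra whose lattice reduct is the chain $C_n=\{a_0<a_1<\cdots<a_{n-1}\}$ with $a_0=0$, $a_{n-1}=1$. Then the set $C_n\setminus\{a_0\}=\{a_1,\dots,a_{n-1}\}$ is closed under $\wedge,\vee,\to$ (in particular $a\to b\neq a_0$ for all $a,b\in C_n\setminus\{a_0\}$), and $\mathbf{S}_{n-1}=\langle C_n\setminus\{a_0\},\wedge,\vee,\to,a_1,1\rangle$ (with the restricted operations, bottom $a_1$ and top $1$) is a semi-Heyting algebra.
   Context: A semi-Heyting algebra is an algebra $\langle L,\vee,\wedge,\to,0,1\rangle$ such that: (SH1) $\langle L,\vee,\wedge,0,1\rangle$ is a bounded lattice with least element $0$ and greatest element $1$; (SH2) $x\wedge(x\to y)=x\wedge y$; (SH3) $x\wedge(y\to z)=x\wedge[(x\wedge y)\to(x\wedge z)]$; (SH4) $x\to x=1$, for all $x,y,z\in L$. *)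

theory Defs
  imports Main
begin

definition bounded_lattice_on ::
  "'a set \<Rightarrow> ('a \<Rightarrow> 'a \<Rightarrow> 'a) \<Rightarrow> ('a \<Rightarrow> 'a \<Rightarrow> 'a) \<Rightarrow> 'a \<Rightarrow> 'a \<Rightarrow> bool" where
  "bounded_lattice_on L jn mt z u \<longleftrightarrow>
     z \<in> L \<and> u \<in> L \<and>
     (\<forall>x\<in>L. \<forall>y\<in>L. jn x y \<in> L \<and> mt x y \<in> L) \<and>
     (\<forall>x\<in>L. \<forall>y\<in>L. jn x y = jn y x \<and> mt x y = mt y x) \<and>
     (\<forall>x\<in>L. \<forall>y\<in>L. \<forall>w\<in>L. jn x (jn y w) = jn (jn x y) w \<and> mt x (mt y w) = mt (mt x y) w) \<and>
     (\<forall>x\<in>L. \<forall>y\<in>L. jn x (mt x y) = x \<and> mt x (jn x y) = x) \<and>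
     (\<forall>x\<in>L. jn z x = x \<and> mt u x = x)"

definition semi_heyting_on ::
  "'a set \<Rightarrow> ('a \<Rightarrow> 'a \<Rightarrow> 'a) \<Rightarrow> ('a \<Rightarrow> 'a \<Rightarrow> 'a) \<Rightarrow> ('a \<Rightarrow> 'a \<Rightarrow> 'a) \<Rightarrow> 'a \<Rightarrow> 'a \<Rightarrow> bool" where
  "semi_heyting_on L jn mt imp z u \<longleftrightarrow>
     bounded_lattice_on L jn mt z u \<and>
     (\<forall>x\<in>L. \<forall>y\<in>L. imp x y \<in> L) \<and>
     (\<forall>x\<in>L. \<forall>y\<in>L. mt x (imp x y) = mt x y) \<and>
     (\<forall>x\<in>L. \<forall>y\<in>L. \<forall>w\<in>L. mt x (imp y w) = mt x (imp (mt x y) (mt x w))) \<and>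
     (\<forall>x\<in>L. imp x x = u)"

end

theory Submission
  imports Defs
begin

text \<open>If the nonzero elements of a semi-Heyting algebra are closed under meet, they are also
closed under join (by absorption, \<open>x = x \<and> (x \<or> y)\<close>) and under implication (by SH2,
\<open>x \<and> (x \<rightarrow> y) = x \<and> y \<noteq> 0\<close>). All identities SH1--SH4 restrict to the subset, so it is again
a semi-Heyting algebra as soon as it has a least element. In a finite chain the nonzero
elements are meet-closed, with least element \<open>a\<^sub>1\<close>.\<close>

lemma bounded_lattice_onD:
  assumes "bounded_lattice_on L jn mt z u"
  shows "z \<in> L" "u \<in> L"
    and "x \<in> L \<Longrightarrow> y \<in> L \<Longrightarrow> jn x y \<in> L"
    and "x \<in> L \<Longrightarrow> y \<in> L \<Longrightarrow> mt x y \<in> L"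
    and "x \<in> L \<Longrightarrow> y \<in> L \<Longrightarrow> jn x y = jn y x"
    and "x \<in> L \<Longrightarrow> y \<in> L \<Longrightarrow> mt x y = mt y x"
    and "x \<in> L \<Longrightarrow> y \<in> L \<Longrightarrow> jn x (mt x y) = x"
    and "x \<in> L \<Longrightarrow> y \<in> L \<Longrightarrow> mt x (jn x y) = x"
    and "x \<in> L \<Longrightarrow> jn z x = x"
  using assms unfolding bounded_lattice_on_def by blast+

lemma semi_heyting_onD:
  assumes "semi_heyting_on L jn mt imp z u"
  shows "bounded_lattice_on L jn mt z u"
    and "x \<in> L \<Longrightarrow> y \<in> L \<Longrightarrow> imp x y \<in> L"
    and "x \<in> L \<Longrightarrow> y \<in> L \<Longrightarrow> mt x (imp x y) = mt x y"
  using assms unfolding semi_heyting_on_def by blast+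

lemma bounded_lattice_on_mt_idem:
  assumes bl: "bounded_lattice_on L jn mt z u" and x: "x \<in> L"
  shows "mt x x = x"
proof -
  have "mt x x = mt x (jn x (mt x x))" using bounded_lattice_onD(7)[OF bl x x] by simp
  also have "\<dots> = x" using bounded_lattice_onD(4,8)[OF bl] x by blast
  finally show ?thesis .
qed

lemma bounded_lattice_on_mt_bot:
  assumes bl: "bounded_lattice_on L jn mt z u" and x: "x \<in> L"
  shows "mt x z = z"
proof -
  have z: "z \<in> L" using bounded_lattice_onD(1)[OF bl] .
  have "mt x z = mt z (jn z x)" using bounded_lattice_onD(6,9)[OF bl] x z by simp
  also have "\<dots> = z" using bounded_lattice_onD(8)[OF bl z x] .
  finally show ?thesis .
qed

lemma bounded_lattice_on_jn_eq_bot: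
  assumes bl: "bounded_lattice_on L jn mt z u" and x: "x \<in> L" and y: "y \<in> L"
    and "jn x y = z"
  shows "x = z"
proof -
  have "x = mt x (jn x y)" using bounded_lattice_onD(8)[OF bl x y] by simp
  also have "\<dots> = z" using bounded_lattice_on_mt_bot[OF bl x] assms(4) by simp
  finally show ?thesis .
qed

lemma semi_heyting_on_imp_eq_bot:
  assumes SH: "semi_heyting_on L jn mt imp z u" and x: "x \<in> L" and y: "y \<in> L"
    and "imp x y = z"
  shows "mt x y = z"
proof -
  have "mt x y = mt x (imp x y)" using semi_heyting_onD(3)[OF SH x y] by simp
  also have "\<dots> = z"
    using bounded_lattice_on_mt_bot[OF semi_heyting_onD(1)[OF SH] x] assms(4) by simp
  finally show ?thesis .
qed

lemma semi_heyting_on_ops_closed_minus_bot: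
  assumes SH: "semi_heyting_on L jn mt imp z u"
    and mt_nonzero: "\<And>x y. x \<in> L - {z} \<Longrightarrow> y \<in> L - {z} \<Longrightarrow> mt x y \<noteq> z"
  shows "\<forall>x\<in>L - {z}. \<forall>y\<in>L - {z}.
           mt x y \<in> L - {z} \<and> jn x y \<in> L - {z} \<and> imp x y \<in> L - {z}"
proof (intro ballI conjI)
  fix x y assume x: "x \<in> L - {z}" and y: "y \<in> L - {z}"
  have bl: "bounded_lattice_on L jn mt z u" using semi_heyting_onD(1)[OF SH] .
  show "mt x y \<in> L - {z}"
    using bounded_lattice_onD(4)[OF bl] mt_nonzero[OF x y] x y by blast
  show "jn x y \<in> L - {z}"
    using bounded_lattice_onD(3)[OF bl] bounded_lattice_on_jn_eq_bot[OF bl] x y by blast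
  show "imp x y \<in> L - {z}"
    using semi_heyting_onD(2)[OF SH] semi_heyting_on_imp_eq_bot[OF SH] mt_nonzero[OF x y] x y
    by blast
qed

lemma semi_heyting_on_minus_bot:
  assumes SH: "semi_heyting_on L jn mt imp z u"
    and mt_nonzero: "\<And>x y. x \<in> L - {z} \<Longrightarrow> y \<in> L - {z} \<Longrightarrow> mt x y \<noteq> z"
    and b: "b \<in> L - {z}" and b_least: "\<And>x. x \<in> L - {z} \<Longrightarrow> jn b x = x"
    and u_nonzero: "u \<noteq> z"
  shows "semi_heyting_on (L - {z}) jn mt imp b u"
proof -
  have closed: "\<forall>x\<in>L - {z}. \<forall>y\<in>L - {z}.
      mt x y \<in> L - {z} \<and> jn x y \<in> L - {z} \<and> imp x y \<in> L - {z}"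
    using semi_heyting_on_ops_closed_minus_bot[OF SH mt_nonzero] .
  have "bounded_lattice_on (L - {z}) jn mt b u"
    using semi_heyting_onD(1)[OF SH] closed b b_least u_nonzero
    unfolding bounded_lattice_on_def by blast
  then show ?thesis using SH closed unfolding semi_heyting_on_def by blast
qed

lemma bounded_lattice_on_chain_mt:
  fixes a :: "nat \<Rightarrow> 'a"
  assumes bl: "bounded_lattice_on L jn mt z u" and aL: "a ` {..<n} \<subseteq> L"
    and chain: "\<And>i j. i < j \<Longrightarrow> j < n \<Longrightarrow> mt (a i) (a j) = a i"
    and i: "i < n" and j: "j < n"
  shows "mt (a i) (a j) = a (min i j)"
proof (cases i j rule: linorder_cases)
  case less then show ?thesis using chain j by (simp add: min_def)
next
  case equal then show ?thesis using bounded_lattice_on_mt_idem[OF bl] aL i by auto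
next
  case greater
  have "mt (a i) (a j) = mt (a j) (a i)" using bounded_lattice_onD(6)[OF bl] aL i j by auto
  then show ?thesis using chain greater i by (simp add: min_def)
qed

lemma bounded_lattice_on_chain_jn:
  fixes a :: "nat \<Rightarrow> 'a"
  assumes bl: "bounded_lattice_on L jn mt z u" and aL: "a ` {..<n} \<subseteq> L"
    and chain: "\<And>i j. i < j \<Longrightarrow> j < n \<Longrightarrow> mt (a i) (a j) = a i"
    and i: "i < n" and j: "j < n"
  shows "jn (a i) (a j) = a (max i j)"
proof -
  have ai: "a i \<in> L" and aj: "a j \<in> L" using aL i j by auto
  show ?thesis
  proof (cases "i \<le> j")
    case True
    have "jn (a i) (a j) = jn (a j) (mt (a j) (a i))"
      using bounded_lattice_onD(5)[OF bl ai aj] bounded_lattice_on_chain_mt[OF bl aL chain j i] True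
      by (simp add: min_def)
    also have "\<dots> = a j" using bounded_lattice_onD(7)[OF bl aj ai] .
    finally show ?thesis using True by (simp add: max_def)
  next
    case False
    have "jn (a i) (a j) = jn (a i) (mt (a i) (a j))"
      using bounded_lattice_on_chain_mt[OF bl aL chain i j] False by (simp add: min_def)
    also have "\<dots> = a i" using bounded_lattice_onD(7)[OF bl ai aj] .
    finally show ?thesis using False by (simp add: max_def)
  qed
qed

lemma bounded_lattice_on_chain_mt_closed:
  fixes a :: "nat \<Rightarrow> 'a"
  assumes bl: "bounded_lattice_on L jn mt z u" and aL: "a ` {..<n} \<subseteq> L"
    and chain: "\<And>i j. i < j \<Longrightarrow> j < n \<Longrightarrow> mt (a i) (a j) = a i"
    and x: "x \<in> a ` {k..<n}" and y: "y \<in> a ` {k..<n}"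
  shows "mt x y \<in> a ` {k..<n}"
proof -
  obtain i j where "i \<in> {k..<n}" "j \<in> {k..<n}" "x = a i" "y = a j" using x y by blast
  then show ?thesis using bounded_lattice_on_chain_mt[OF bl aL chain, of i j] by (simp add: min_def)
qed

lemma bounded_lattice_on_chain_jn_least:
  fixes a :: "nat \<Rightarrow> 'a"
  assumes bl: "bounded_lattice_on L jn mt z u" and aL: "a ` {..<n} \<subseteq> L"
    and chain: "\<And>i j. i < j \<Longrightarrow> j < n \<Longrightarrow> mt (a i) (a j) = a i"
    and x: "x \<in> a ` {k..<n}"
  shows "jn (a k) x = x"
proof -
  obtain i where "i \<in> {k..<n}" "x = a i" using x by blast
  then show ?thesis using bounded_lattice_on_chain_jn[OF bl aL chain, of k i] by simp
qed

lemma image_lessThan_minus_first: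
  fixes a :: "nat \<Rightarrow> 'a"
  assumes "\<And>i. 0 < i \<Longrightarrow> i < n \<Longrightarrow> a i \<noteq> a 0"
  shows "a ` {..<n} - {a 0} = a ` {1..<n}"
proof (intro equalityI subsetI)
  fix x assume "x \<in> a ` {..<n} - {a 0}"
  then obtain i where "i < n" "x = a i" "a i \<noteq> a 0" by blast
  then show "x \<in> a ` {1..<n}" by (cases i) auto
next
  fix x assume "x \<in> a ` {1..<n}"
  then show "x \<in> a ` {..<n} - {a 0}" using assms by auto
qed

theorem mainTheorem1:
  fixes C :: "'a set" and jn mt imp :: "'a \<Rightarrow> 'a \<Rightarrow> 'a" and z u :: 'a
    and a :: "nat \<Rightarrow> 'a" and n :: nat
  assumes n2: "n \<ge> 2"
    and SH: "semi_heyting_on C jn mt imp z u"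
    and carrier: "C = a ` {..<n}"
    and chain: "\<And>i j. i < j \<Longrightarrow> j < n \<Longrightarrow> mt (a i) (a j) = a i \<and> a i \<noteq> a j"
    and a0: "a 0 = z"
    and an: "a (n - 1) = u"
  shows "(\<forall>x\<in>C - {a 0}. \<forall>y\<in>C - {a 0}.
            mt x y \<in> C - {a 0} \<and> jn x y \<in> C - {a 0} \<and> imp x y \<in> C - {a 0})
         \<and> semi_heyting_on (C - {a 0}) jn mt imp (a 1) u"
proof -
  have bl: "bounded_lattice_on C jn mt z u" using semi_heyting_onD(1)[OF SH] .
  have aC: "a ` {..<n} \<subseteq> C" using carrier by simp
  have mt_chain: "\<And>i j. i < j \<Longrightarrow> j < n \<Longrightarrow> mt (a i) (a j) = a i" using chain by blast
  have "a ` {..<n} - {a 0} = a ` {1..<n}"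
    by (rule image_lessThan_minus_first) (metis chain)
  then have nonzero: "C - {z} = a ` {1..<n}" using carrier a0 by simp
  have mt_nonzero: "mt x y \<noteq> z" if "x \<in> C - {z}" "y \<in> C - {z}" for x y
  proof -
    have "mt x y \<in> C - {z}"
      using bounded_lattice_on_chain_mt_closed[OF bl aC mt_chain that[unfolded nonzero]]
      unfolding nonzero .
    then show ?thesis by blast
  qed
  have least: "jn (a 1) x = x" if "x \<in> C - {z}" for x
    using bounded_lattice_on_chain_jn_least[OF bl aC mt_chain that[unfolded nonzero]] .
  have "a 1 \<in> C - {z}" "a (n - 1) \<in> C - {z}" unfolding nonzero using n2 by auto
  then show ?thesis
    using semi_heyting_on_ops_closed_minus_bot[OF SH mt_nonzero]
      semi_heyting_on_minus_bot[OF SH mt_nonzero _ least] unfolding a0 an by simp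
qed

end
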